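(* Let $R$ be a generalized p.q.-Baer $*$-ring whose projections form a lattice. The following are equivalent: (1) $R$ satisfies the parallelogram law; (2) whenever projections $e,f\in R$ are in position $p'$, $e\sim f$.
   Context: A $*$-ring is a ring with an involution; a projection is $e$ with $e=e^*=e^2$, ordered by $e\le f\iff e=ef$. $R$ is a generalized p.q.-Baer $*$-ring if for every $x\in R$ there are $n\in\mathbb N$ and a projection $e$ with $r_R((xR)^n)=eR$, where $r_R(S)=\{a: sa=0\ \forall s\in S\}$. Projections $e,f$ are equivalent, $e\sim f$, if there is $w\in R$ with $w^*w=e$ and $ww^*=f$. A $*$-ring whose projections form a lattice satisfies the parallelogram law if $e-e\wedge f\sim e\vee f-f$ for all projections $e,f$. Projections $e,f$ in a $*$-ring with unity whose projections form a lattice are in position $p'$ if $e\wedge(1-f)=(1-e)\wedge f=0$. In the paper, the lattice operations are related to generalized central covers $GC$ (smallest central projection $e$ with $x^ne=x^n$ for some $n$) by $e\vee f=f+GC(e(1-f))$ and $e\wedge f=e-GC(e(1-f))$. *)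

theory Defs
  imports Main
begin

definition star_ring :: "('a::ring_1 \<Rightarrow> 'a) \<Rightarrow> bool" where
  "star_ring s \<longleftrightarrow> (\<forall>x y. s (x + y) = s x + s y) \<and> (\<forall>x y. s (x * y) = s y * s x)
     \<and> (\<forall>x. s (s x) = x)"

definition proj :: "('a::ring_1 \<Rightarrow> 'a) \<Rightarrow> 'a \<Rightarrow> bool" where
  "proj s e \<longleftrightarrow> e = s e \<and> e = e * e"

definition proj_le :: "'a::ring_1 \<Rightarrow> 'a \<Rightarrow> bool" where
  "proj_le e f \<longleftrightarrow> e = e * f"

definition r_ann :: "'a::ring_1 set \<Rightarrow> 'a set" where
  "r_ann S = {a. \<forall>x\<in>S. x * a = 0}"

definition right_ideal_gen :: "'a::ring_1 \<Rightarrow> 'a set" where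
  "right_ideal_gen x = {x * r | r. True}"

(* products of n elements of S; its right annihilator equals that of the ideal power S^n *)
definition set_pow :: "'a::ring_1 set \<Rightarrow> nat \<Rightarrow> 'a set" where
  "set_pow S n = {prod_list xs | xs. length xs = n \<and> set xs \<subseteq> S}"

definition gen_pq_baer :: "('a::ring_1 \<Rightarrow> 'a) \<Rightarrow> bool" where
  "gen_pq_baer s \<longleftrightarrow> star_ring s \<and>
     (\<forall>x. \<exists>n\<ge>1. \<exists>e. proj s e \<and> r_ann (set_pow (right_ideal_gen x) n) = right_ideal_gen e)"

definition proj_equiv :: "('a::ring_1 \<Rightarrow> 'a) \<Rightarrow> 'a \<Rightarrow> 'a \<Rightarrow> bool" where
  "proj_equiv s e f \<longleftrightarrow> (\<exists>w. s w * w = e \<and> w * s w = f)"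

definition is_pglb :: "('a::ring_1 \<Rightarrow> 'a) \<Rightarrow> 'a \<Rightarrow> 'a \<Rightarrow> 'a \<Rightarrow> bool" where
  "is_pglb s e f g \<longleftrightarrow> proj s g \<and> proj_le g e \<and> proj_le g f \<and>
     (\<forall>h. proj s h \<and> proj_le h e \<and> proj_le h f \<longrightarrow> proj_le h g)"

definition is_plub :: "('a::ring_1 \<Rightarrow> 'a) \<Rightarrow> 'a \<Rightarrow> 'a \<Rightarrow> 'a \<Rightarrow> bool" where
  "is_plub s e f g \<longleftrightarrow> proj s g \<and> proj_le e g \<and> proj_le f g \<and>
     (\<forall>h. proj s h \<and> proj_le e h \<and> proj_le f h \<longrightarrow> proj_le g h)"

definition proj_lattice :: "('a::ring_1 \<Rightarrow> 'a) \<Rightarrow> bool" where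
  "proj_lattice s \<longleftrightarrow> (\<forall>e f. proj s e \<and> proj s f \<longrightarrow>
     (\<exists>g. is_pglb s e f g) \<and> (\<exists>g. is_plub s e f g))"

definition pmeet :: "('a::ring_1 \<Rightarrow> 'a) \<Rightarrow> 'a \<Rightarrow> 'a \<Rightarrow> 'a" where
  "pmeet s e f = (THE g. is_pglb s e f g)"

definition pjoin :: "('a::ring_1 \<Rightarrow> 'a) \<Rightarrow> 'a \<Rightarrow> 'a \<Rightarrow> 'a" where
  "pjoin s e f = (THE g. is_plub s e f g)"

definition parallelogram_law :: "('a::ring_1 \<Rightarrow> 'a) \<Rightarrow> bool" where
  "parallelogram_law s \<longleftrightarrow> (\<forall>e f. proj s e \<and> proj s f \<longrightarrow>
     proj_equiv s (e - pmeet s e f) (pjoin s e f - f))"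

definition position_p' :: "('a::ring_1 \<Rightarrow> 'a) \<Rightarrow> 'a \<Rightarrow> 'a \<Rightarrow> bool" where
  "position_p' s e f \<longleftrightarrow> pmeet s e (1 - f) = 0 \<and> pmeet s (1 - e) f = 0"

end

theory Submission
  imports Defs
begin

(*
  The map e \<mapsto> 1 - e reverses the order of
  projections, hence exchanges meets and joins (De Morgan). For (1) \<Longrightarrow> (2): if e, f are
  in position p', then e \<sqinter> (1 - f) = 0 and e \<squnion> (1 - f) = 1 - (1 - e) \<sqinter> f = 1, so the
  parallelogram law for e and 1 - f says e \<sim> f. For (2) \<Longrightarrow> (1): e - e \<sqinter> f and e \<squnion> f - f
  are in position p'. A projection below e - e \<sqinter> f and orthogonal to e \<squnion> f - f lies below
  e \<sqinter> f, hence is 0; the other meet is the same one for the pair 1 - f, 1 - e.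
*)

context
  fixes s :: "'a::ring_1 \<Rightarrow> 'a"
  assumes star: "star_ring s"
begin

lemma star_ring_add: "s (x + y) = s x + s y"
  and star_ring_mult: "s (x * y) = s y * s x"
  and star_ring_involution: "s (s x) = x"
  using star by (simp_all add: star_ring_def)

lemma star_ring_diff: "s (x - y) = s x - s y"
  using star_ring_add[of "x - y" y] by (simp add: algebra_simps)

lemma star_ring_zero: "s 0 = 0"
  using star_ring_diff[of 0 0] by simp

lemma star_ring_one: "s 1 = 1"
  using star_ring_mult[of "s 1" 1] by (simp add: star_ring_involution)

lemma proj_one_minus: "proj s e \<Longrightarrow> proj s (1 - e)"
  unfolding proj_def by (simp add: star_ring_diff star_ring_one algebra_simps)

lemma proj_mult_eq_zero_commute:
  assumes "proj s a" "proj s b" "a * b = 0"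
  shows "b * a = 0"
proof -
  have "s (a * b) = s b * s a"
    by (rule star_ring_mult)
  then show ?thesis
    using assms star_ring_zero unfolding proj_def by metis
qed

lemma proj_le_mult_commute:
  assumes "proj s e" "proj s f" "proj_le e f"
  shows "f * e = e"
proof -
  have "s (e * f) = s f * s e"
    by (rule star_ring_mult)
  then show ?thesis
    using assms unfolding proj_def proj_le_def by metis
qed

lemma proj_le_antisym: "proj s e \<Longrightarrow> proj s f \<Longrightarrow> proj_le e f \<Longrightarrow> proj_le f e \<Longrightarrow> e = f"
  using proj_le_mult_commute[of f e] unfolding proj_le_def by simp

lemma proj_diff:
  assumes "proj s e" "proj s m" "proj_le m e"
  shows "proj s (e - m)"
  using assms proj_le_mult_commute[OF assms(2,1,3)]
  unfolding proj_def proj_le_def by (simp add: star_ring_diff algebra_simps)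

lemma proj_le_one_minus_iff: "proj_le h (1 - g) \<longleftrightarrow> h * g = 0"
  unfolding proj_le_def by (auto simp: algebra_simps)

lemma proj_le_one_minus_one_minus_iff:
  assumes "proj s e" "proj s f"
  shows "proj_le (1 - f) (1 - e) \<longleftrightarrow> proj_le e f"
proof
  assume "proj_le (1 - f) (1 - e)"
  then have "(1 - f) * e = 0"
    by (simp add: proj_le_one_minus_iff)
  then have "e * (1 - f) = 0"
    using assms by (simp add: proj_mult_eq_zero_commute proj_one_minus)
  then show "proj_le e f"
    unfolding proj_le_def by (simp add: algebra_simps)
next
  assume "proj_le e f"
  then have "e * (1 - f) = 0"
    unfolding proj_le_def by (simp add: algebra_simps)
  then show "proj_le (1 - f) (1 - e)"
    using assms by (simp add: proj_le_one_minus_iff proj_mult_eq_zero_commute proj_one_minus)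
qed

lemma is_pglb_one_minus:
  assumes "proj s e" "proj s f" "is_plub s e f g"
  shows "is_pglb s (1 - e) (1 - f) (1 - g)"
  unfolding is_pglb_def
proof (intro conjI allI impI)
  have "proj s g"
    using assms(3) by (simp add: is_plub_def)
  then show "proj s (1 - g)" "proj_le (1 - g) (1 - e)" "proj_le (1 - g) (1 - f)"
    using assms by (simp_all add: proj_one_minus proj_le_one_minus_one_minus_iff is_plub_def)
  fix h assume h: "proj s h \<and> proj_le h (1 - e) \<and> proj_le h (1 - f)"
  then have "proj_le e (1 - h)" "proj_le f (1 - h)"
    using assms(1,2) proj_le_one_minus_one_minus_iff[of _ "1 - h"] by (auto simp: proj_one_minus)
  then have "proj_le g (1 - h)"
    using assms(3) h proj_one_minus unfolding is_plub_def by blast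
  then show "proj_le h (1 - g)"
    using h \<open>proj s g\<close> proj_le_one_minus_one_minus_iff[of g "1 - h"] by (simp add: proj_one_minus)
qed

lemma is_plub_one_minus:
  assumes "proj s e" "proj s f" "is_pglb s e f g"
  shows "is_plub s (1 - e) (1 - f) (1 - g)"
  unfolding is_plub_def
proof (intro conjI allI impI)
  have "proj s g"
    using assms(3) by (simp add: is_pglb_def)
  then show "proj s (1 - g)" "proj_le (1 - e) (1 - g)" "proj_le (1 - f) (1 - g)"
    using assms by (simp_all add: proj_one_minus proj_le_one_minus_one_minus_iff is_pglb_def)
  fix h assume h: "proj s h \<and> proj_le (1 - e) h \<and> proj_le (1 - f) h"
  then have "proj_le (1 - h) e" "proj_le (1 - h) f"
    using assms(1,2) proj_le_one_minus_one_minus_iff[of "1 - h"] by (auto simp: proj_one_minus)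
  then have "proj_le (1 - h) g"
    using assms(3) h proj_one_minus unfolding is_pglb_def by blast
  then show "proj_le (1 - g) h"
    using h \<open>proj s g\<close> proj_le_one_minus_one_minus_iff[of "1 - h" g] by (simp add: proj_one_minus)
qed

lemma pmeet_eqI: "is_pglb s e f g \<Longrightarrow> pmeet s e f = g"
  unfolding pmeet_def by (rule the_equality) (auto simp: is_pglb_def intro: proj_le_antisym)

lemma pjoin_eqI: "is_plub s e f g \<Longrightarrow> pjoin s e f = g"
  unfolding pjoin_def by (rule the_equality) (auto simp: is_plub_def intro: proj_le_antisym)

context
  assumes lattice: "proj_lattice s"
begin

lemma is_pglb_pmeet: "proj s e \<Longrightarrow> proj s f \<Longrightarrow> is_pglb s e f (pmeet s e f)"
  using lattice pmeet_eqI unfolding proj_lattice_def by blast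

lemma is_plub_pjoin: "proj s e \<Longrightarrow> proj s f \<Longrightarrow> is_plub s e f (pjoin s e f)"
  using lattice pjoin_eqI unfolding proj_lattice_def by blast

lemma pmeet_commute: "proj s e \<Longrightarrow> proj s f \<Longrightarrow> pmeet s e f = pmeet s f e"
  by (rule pmeet_eqI[symmetric]) (use is_pglb_pmeet in \<open>auto simp: is_pglb_def\<close>)

lemma pjoin_commute: "proj s e \<Longrightarrow> proj s f \<Longrightarrow> pjoin s e f = pjoin s f e"
  by (rule pjoin_eqI[symmetric]) (use is_plub_pjoin in \<open>auto simp: is_plub_def\<close>)

lemma pmeet_one_minus: "proj s e \<Longrightarrow> proj s f \<Longrightarrow> pmeet s (1 - e) (1 - f) = 1 - pjoin s e f"
  by (simp add: pmeet_eqI is_pglb_one_minus is_plub_pjoin)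

lemma pjoin_one_minus: "proj s e \<Longrightarrow> proj s f \<Longrightarrow> pjoin s (1 - e) (1 - f) = 1 - pmeet s e f"
  by (simp add: pjoin_eqI is_plub_one_minus is_pglb_pmeet)

lemma pmeet_eq_zeroI:
  assumes "proj s e" "proj s f"
    and "\<And>h. proj s h \<Longrightarrow> proj_le h e \<Longrightarrow> proj_le h f \<Longrightarrow> h = 0"
  shows "pmeet s e f = 0"
  using is_pglb_pmeet[OF assms(1,2)] assms(3) unfolding is_pglb_def by blast

lemma position_p'_pjoin_eq_one:
  assumes "proj s e" "proj s f" "position_p' s e f"
  shows "pjoin s e (1 - f) = 1"
proof -
  have "1 - pjoin s e (1 - f) = pmeet s (1 - e) f"
    using assms(1,2) pmeet_one_minus[of e "1 - f"] by (simp add: proj_one_minus)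
  then show ?thesis
    using assms(3) by (simp add: position_p'_def)
qed

lemma proj_diff_pmeet: "proj s e \<Longrightarrow> proj s f \<Longrightarrow> proj s (e - pmeet s e f)"
  using is_pglb_pmeet by (simp add: proj_diff is_pglb_def)

lemma proj_pjoin_diff: "proj s e \<Longrightarrow> proj s f \<Longrightarrow> proj s (pjoin s e f - f)"
  using is_plub_pjoin by (simp add: proj_diff is_plub_def)

lemma pmeet_diff_pmeet_one_minus_diff_pjoin:
  assumes e: "proj s e" and f: "proj s f"
  shows "pmeet s (e - pmeet s e f) (1 - (pjoin s e f - f)) = 0"
proof (rule pmeet_eq_zeroI)
  show "proj s (e - pmeet s e f)" "proj s (1 - (pjoin s e f - f))"
    using e f by (simp_all add: proj_diff_pmeet proj_pjoin_diff proj_one_minus)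
  define m where "m = pmeet s e f"
  define j where "j = pjoin s e f"
  have m: "is_pglb s e f m" and j: "is_plub s e f j"
    using is_pglb_pmeet[OF e f] is_plub_pjoin[OF e f] by (simp_all add: m_def j_def)
  have ee: "e * e = e"
    using e by (simp add: proj_def)
  have me: "m * e = m" and ej: "e * j = e"
    using m j by (simp_all add: is_pglb_def is_plub_def proj_le_def)
  fix h assume h: "proj s h" "proj_le h (e - m)" "proj_le h (1 - (j - f))"
  have "h * e = h * (e - m) * e"
    using h(2) by (simp add: proj_le_def)
  also have "\<dots> = h * (e - m)"
    by (simp add: mult.assoc left_diff_distrib ee me)
  finally have he: "h * e = h"
    using h(2) by (simp add: proj_le_def)
  then have "h * j = h"
    using ej by (metis mult.assoc)
  then have "proj_le h f"
    using h(3) by (simp add: proj_le_one_minus_iff proj_le_def right_diff_distrib)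
  then have "proj_le h m"
    using m h(1) he by (simp add: is_pglb_def proj_le_def)
  then show "h = 0"
    using h(2) he by (simp add: proj_le_def right_diff_distrib)
qed

lemma position_p'_diff_pmeet_diff_pjoin:
  assumes e: "proj s e" and f: "proj s f"
  shows "position_p' s (e - pmeet s e f) (pjoin s e f - f)"
proof -
  have e': "proj s (1 - e)" and f': "proj s (1 - f)"
    using e f by (simp_all add: proj_one_minus)
  have "pmeet s (1 - f - pmeet s (1 - f) (1 - e)) (1 - (pjoin s (1 - f) (1 - e) - (1 - e))) = 0"
    using pmeet_diff_pmeet_one_minus_diff_pjoin[OF f' e'] .
  then have "pmeet s (pjoin s e f - f) (1 - (e - pmeet s e f)) = 0"
    using e f by (simp add: pmeet_one_minus pjoin_one_minus pmeet_commute[of f] pjoin_commute[of f])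
  then have "pmeet s (1 - (e - pmeet s e f)) (pjoin s e f - f) = 0"
    using e f pmeet_commute by (simp add: proj_one_minus proj_diff_pmeet proj_pjoin_diff)
  then show ?thesis
    using pmeet_diff_pmeet_one_minus_diff_pjoin[OF e f] by (simp add: position_p'_def)
qed

end

end

theorem mainTheorem12:
  fixes s :: "'a::ring_1 \<Rightarrow> 'a"
  assumes "gen_pq_baer s" and "proj_lattice s"
  shows "parallelogram_law s \<longleftrightarrow>
    (\<forall>e f. proj s e \<and> proj s f \<and> position_p' s e f \<longrightarrow> proj_equiv s e f)"
proof
  have star: "star_ring s"
    using assms(1) by (simp add: gen_pq_baer_def)
  show "\<forall>e f. proj s e \<and> proj s f \<and> position_p' s e f \<longrightarrow> proj_equiv s e f"
    if law: "parallelogram_law s"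
  proof (intro allI impI)
    fix e f assume ef: "proj s e \<and> proj s f \<and> position_p' s e f"
    then have "proj_equiv s (e - pmeet s e (1 - f)) (pjoin s e (1 - f) - (1 - f))"
      using law star by (simp add: parallelogram_law_def proj_one_minus)
    then show "proj_equiv s e f"
      using ef star assms(2) by (simp add: position_p'_def position_p'_pjoin_eq_one)
  qed
  show "parallelogram_law s"
    if "\<forall>e f. proj s e \<and> proj s f \<and> position_p' s e f \<longrightarrow> proj_equiv s e f"
    unfolding parallelogram_law_def
  proof (intro allI impI)
    fix e f assume "proj s e \<and> proj s f"
    then show "proj_equiv s (e - pmeet s e f) (pjoin s e f - f)"
      using that star assms(2)
      by (simp add: position_p'_diff_pmeet_diff_pjoin proj_diff_pmeet proj_pjoin_diff)
  qed
qed

end
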